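(* There exist an increasing function $g:\mathbb{N}\setminus\{0\}\to\mathbb{N}\setminus\{0\}$ and, for each $i\in\mathbb{N}\setminus\{0\}$, a regular $g(i)$-sided polygon $P^i\subseteq\mathbb{R}^2$ such that $S=\bigcup_{i=1}^\infty\big(P^i+i\,\mathbf e(1)\big)$ is a rational MICP representable set and the sets $P^i+i\,\mathbf e(1)$, $i\ge1$, are pairwise disjoint.
   Context: $\mathbf e(1)=(1,0)\in\mathbb{R}^2$. A set $S\subseteq\mathbb{R}^n$ is MICP representable if there is a closed convex $M\subseteq\mathbb{R}^{n+p+d}$ (variables $(\mathbf x,\mathbf y,\mathbf z)$) such that $\mathbf x\in S$ iff there exist $\mathbf y\in\mathbb{R}^p$, $\mathbf z\in\mathbb{Z}^d$ with $(\mathbf x,\mathbf y,\mathbf z)\in M$. It is rational MICP representable if such an $M$ exists with $\operatorname{proj}_{\mathbf z}(M)$ rationally unbounded, where $I\subseteq\mathbb{R}^d$ is rationally unbounded if for every image $I'\subseteq\mathbb{R}^{d'}$ of $I$ under a rational affine map, either $I'$ is bounded or its recession cone $I'_\infty=\{\mathbf r:\ \mathbf x+\lambda\mathbf r\in I'\ \forall\mathbf x\in I',\lambda\ge0\}$ contains a nonzero integer vector. *)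

theory Defs
  imports "HOL-Analysis.Analysis"
begin

text \<open>Points of R^m are encoded as functions nat => real vanishing from index m on.
  The type nat => real carries the product topology (Function_Topology); on the
  closed subspace vec m this is the Euclidean topology of R^m.\<close>

definition vec :: "nat \<Rightarrow> (nat \<Rightarrow> real) set" where
  "vec m = {x. \<forall>i\<ge>m. x i = 0}"

definition convex_set :: "(nat \<Rightarrow> real) set \<Rightarrow> bool" where
  "convex_set M \<longleftrightarrow> (\<forall>x\<in>M. \<forall>y\<in>M. \<forall>u::real. 0 \<le> u \<and> u \<le> 1 \<longrightarrow>
      (\<lambda>i. u * x i + (1 - u) * y i) \<in> M)"

definition join :: "nat \<Rightarrow> nat \<Rightarrow> (nat \<Rightarrow> real) \<Rightarrow> (nat \<Rightarrow> real) \<Rightarrow> (nat \<Rightarrow> real) \<Rightarrow> (nat \<Rightarrow> real)" where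
  "join n p x y z = (\<lambda>i. if i < n then x i else if i < n + p then y (i - n) else z (i - n - p))"

definition proj_z :: "nat \<Rightarrow> nat \<Rightarrow> nat \<Rightarrow> (nat \<Rightarrow> real) set \<Rightarrow> (nat \<Rightarrow> real) set" where
  "proj_z n p d M = (\<lambda>w. \<lambda>i. if i < d then w (n + p + i) else 0) ` M"

definition bounded_set :: "(nat \<Rightarrow> real) set \<Rightarrow> bool" where
  "bounded_set I \<longleftrightarrow> (\<exists>B. \<forall>x\<in>I. \<forall>i. \<bar>x i\<bar> \<le> B)"

definition rec_cone :: "nat \<Rightarrow> (nat \<Rightarrow> real) set \<Rightarrow> (nat \<Rightarrow> real) set" where
  "rec_cone m I = {r \<in> vec m. \<forall>x\<in>I. \<forall>t::real. t \<ge> 0 \<longrightarrow> (\<lambda>i. x i + t * r i) \<in> I}"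

definition aff_map :: "nat \<Rightarrow> nat \<Rightarrow> (nat \<Rightarrow> nat \<Rightarrow> real) \<Rightarrow> (nat \<Rightarrow> real) \<Rightarrow> (nat \<Rightarrow> real) \<Rightarrow> (nat \<Rightarrow> real)" where
  "aff_map d d' A b x = (\<lambda>i. if i < d' then (\<Sum>j<d. A i j * x j) + b i else 0)"

definition rationally_unbounded :: "nat \<Rightarrow> (nat \<Rightarrow> real) set \<Rightarrow> bool" where
  "rationally_unbounded d I \<longleftrightarrow>
     (\<forall>d' A b. (\<forall>i j. A i j \<in> \<rat>) \<and> (\<forall>i. b i \<in> \<rat>) \<longrightarrow>
        (let I' = aff_map d d' A b ` I in
          bounded_set I' \<or> (\<exists>r\<in>rec_cone d' I'. (\<exists>i. r i \<noteq> 0) \<and> (\<forall>i. r i \<in> \<int>))))"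

definition MICP_repr_by :: "nat \<Rightarrow> nat \<Rightarrow> nat \<Rightarrow> (nat \<Rightarrow> real) set \<Rightarrow> (nat \<Rightarrow> real) set \<Rightarrow> bool" where
  "MICP_repr_by n p d M S \<longleftrightarrow>
     M \<subseteq> vec (n + p + d) \<and> closed M \<and> convex_set M \<and>
     (\<forall>x\<in>vec n. x \<in> S \<longleftrightarrow>
        (\<exists>y\<in>vec p. \<exists>z\<in>vec d. (\<forall>i<d. z i \<in> \<int>) \<and> join n p x y z \<in> M))"

definition MICP_representable :: "nat \<Rightarrow> (nat \<Rightarrow> real) set \<Rightarrow> bool" where
  "MICP_representable n S \<longleftrightarrow> S \<subseteq> vec n \<and> (\<exists>p d M. MICP_repr_by n p d M S)"

definition rational_MICP_representable :: "nat \<Rightarrow> (nat \<Rightarrow> real) set \<Rightarrow> bool" where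
  "rational_MICP_representable n S \<longleftrightarrow> S \<subseteq> vec n \<and>
     (\<exists>p d M. MICP_repr_by n p d M S \<and> rationally_unbounded d (proj_z n p d M))"

definition pt2 :: "real \<Rightarrow> real \<Rightarrow> (nat \<Rightarrow> real)" where
  "pt2 a c = (\<lambda>j. if j = 0 then a else if j = 1 then c else 0)"

definition e1 :: "nat \<Rightarrow> real" where
  "e1 = pt2 1 0"

definition regular_polygon :: "nat \<Rightarrow> (nat \<Rightarrow> real) set \<Rightarrow> bool" where
  "regular_polygon k P \<longleftrightarrow> k \<ge> 3 \<and>
     (\<exists>c1 c2 \<rho> \<theta>. \<rho> > 0 \<and>
        (let v = (\<lambda>l. pt2 (c1 + \<rho> * cos (\<theta> + 2 * pi * real l / real k))
                          (c2 + \<rho> * sin (\<theta> + 2 * pi * real l / real k)))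
         in P = {(\<lambda>j. \<Sum>l<k. w l * v l j) | w. (\<forall>l<k. w l \<ge> 0) \<and> (\<Sum>l<k. w l) = 1}))"

definition translate :: "(nat \<Rightarrow> real) \<Rightarrow> (nat \<Rightarrow> real) set \<Rightarrow> (nat \<Rightarrow> real) set" where
  "translate t P = (\<lambda>x. \<lambda>j. x j + t j) ` P"

end

(*
  P^i is the regular 2^(i+2)-gon of circumradius r_i = (1 - 2^-i) / 3 centred at the origin, so the
  translates P^i + i e1 are pairwise disjoint. The convex body M in R^3 is cut out by z >= 1 and, for
  every j >= 1 and every edge of P^j, the edge inequality of P^j + z e1 relaxed by s_j (z - j), where
  s_j = 2^-j / 4. At an integer height z = i the relaxed edges of layer i are exactly the edges of P^i,
  while for j <> i the relaxation exceeds the gap between r_i and the inradius r_j cos (pi / 2^(j+2)) of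
  P^j, so these inequalities hold on the whole circumscribed disc of P^i. Hence the integer slices of M
  are the translated polygons, and the projection of M to z is the half-line [1, oo), which is
  rationally unbounded.
*)
theory Submission
  imports Defs
begin

lemma one_minus_cos_le_half_square: "1 - cos (x::real) \<le> x\<^sup>2 / 2"
proof -
  have "cos x = 1 - 2 * sin (x/2) ^ 2"
    using cos_double_sin[of "x/2"] by simp
  moreover have "sin (x/2) ^ 2 \<le> (x/2) ^ 2"
    using abs_sin_x_le_abs_x[of "x/2"] by (metis abs_ge_zero power2_abs power_mono)
  ultimately show ?thesis by (simp add: power_divide)
qed

lemma one_minus_cos_pi_div_le:
  fixes N :: real
  assumes "8 \<le> N"
  shows "1 - cos (pi / N) \<le> 1 / N"
proof -
  have pi2: "pi\<^sup>2 \<le> 16"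
    using power_mono[of pi 4 2] pi_less_4 pi_gt_zero by simp
  have "1 - cos (pi / N) \<le> (pi / N)\<^sup>2 / 2" by (rule one_minus_cos_le_half_square)
  also have "\<dots> = pi\<^sup>2 / (2 * N * N)" by (simp add: power2_eq_square)
  also have "\<dots> \<le> 16 / (2 * N * N)" using pi2 assms by (intro divide_right_mono) auto
  also have "\<dots> \<le> 1 / N" using assms by (simp add: field_simps)
  finally show ?thesis .
qed

lemma cos_int_mult_pi_div_le:
  fixes n :: int
  assumes "1 \<le> n" "n \<le> int k"
  shows "cos (of_int n * pi / real k) \<le> cos (pi / real k)"
proof (rule cos_monotone_0_pi_le)
  have k: "0 < real k" using assms by simp
  show "0 \<le> pi / real k" by simp
  show "pi / real k \<le> of_int n * pi / real k"
    using assms k by (simp add: divide_right_mono)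
  have "of_int n \<le> real k" using assms by linarith
  then show "of_int n * pi / real k \<le> pi"
    using k by (simp add: field_simps mult_right_mono)
qed

lemma cos_odd_mult_pi_div_le:
  fixes n :: int
  assumes "odd n"
  shows "cos (of_int n * pi / real k) \<le> cos (pi / real k)"
proof (cases "k = 0")
  case False
  define r where "r = n mod (2 * int k)"
  have r: "0 \<le> r" "r < 2 * int k" "odd r"
    using False assms unfolding r_def by (auto simp: odd_iff_mod_2_eq_one mod_mod_cancel)
  have "of_int n * pi / real k = of_int r * pi / real k + 2 * pi * of_int (n div (2 * int k))"
    using False unfolding r_def
    by (subst (1) div_mult_mod_eq[symmetric, of n "2 * int k"]) (simp add: field_simps)
  then have "cos (of_int n * pi / real k) = cos (of_int r * pi / real k)"
    by (simp add: cos_add)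
  also have "\<dots> \<le> cos (pi / real k)"
  proof (cases "r \<le> int k")
    case True
    have "r \<noteq> 0" using r by auto
    with r True show ?thesis by (intro cos_int_mult_pi_div_le) auto
  next
    case False
    have "of_int r * pi / real k = 2 * pi - of_int (2 * int k - r) * pi / real k"
      using \<open>k \<noteq> 0\<close> by (simp add: field_simps)
    moreover have "cos (of_int (2 * int k - r) * pi / real k) \<le> cos (pi / real k)"
      using r False by (intro cos_int_mult_pi_div_le) auto
    ultimately show ?thesis by simp
  qed
  finally show ?thesis .
qed simp

definition polygon_vertex :: "nat \<Rightarrow> real \<Rightarrow> nat \<Rightarrow> nat \<Rightarrow> real" where
  "polygon_vertex k r l = pt2 (r * cos (2 * pi * real l / real k)) (r * sin (2 * pi * real l / real k))"

definition centred_polygon :: "nat \<Rightarrow> real \<Rightarrow> (nat \<Rightarrow> real) set" where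
  "centred_polygon k r = {(\<lambda>j. \<Sum>l<k. w l * polygon_vertex k r l j) | w.
     (\<forall>l<k. 0 \<le> w l) \<and> (\<Sum>l<k. w l) = 1}"

definition facet_angle :: "nat \<Rightarrow> nat \<Rightarrow> real" where
  "facet_angle k l = (2 * real l + 1) * pi / real k"

lemma pt2_simps [simp]: "pt2 a c 0 = a" "pt2 a c (Suc 0) = c" "2 \<le> n \<Longrightarrow> pt2 a c n = 0"
  unfolding pt2_def by auto

lemma regular_polygon_centred_polygon:
  assumes "3 \<le> k" "0 < r"
  shows "regular_polygon k (centred_polygon k r)"
  unfolding regular_polygon_def centred_polygon_def polygon_vertex_def Let_def
  using assms by (intro conjI exI[of _ 0] exI[of _ r]) auto

lemma mem_centred_polygon:
  "u \<in> centred_polygon k r \<longleftrightarrow> u \<in> vec 2 \<and> (\<exists>w. (\<forall>l<k. 0 \<le> w l) \<and> (\<Sum>l<k. w l) = 1 \<and>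
     u 0 = (\<Sum>l<k. w l * (r * cos (2 * pi * real l / real k))) \<and>
     u 1 = (\<Sum>l<k. w l * (r * sin (2 * pi * real l / real k))))"
proof -
  have "u = (\<lambda>j. \<Sum>l<k. w l * polygon_vertex k r l j) \<longleftrightarrow> u \<in> vec 2 \<and>
     u 0 = (\<Sum>l<k. w l * (r * cos (2 * pi * real l / real k))) \<and>
     u 1 = (\<Sum>l<k. w l * (r * sin (2 * pi * real l / real k)))" for w
  proof
    assume u: "u \<in> vec 2 \<and> u 0 = (\<Sum>l<k. w l * (r * cos (2 * pi * real l / real k))) \<and>
      u 1 = (\<Sum>l<k. w l * (r * sin (2 * pi * real l / real k)))"
    show "u = (\<lambda>j. \<Sum>l<k. w l * polygon_vertex k r l j)"
    proof (rule ext)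
      fix j
      show "u j = (\<Sum>l<k. w l * polygon_vertex k r l j)"
        using u by (cases "j < 2") (auto simp: vec_def polygon_vertex_def less_2_cases_iff)
    qed
  qed (auto simp: vec_def polygon_vertex_def)
  then show ?thesis unfolding centred_polygon_def by blast
qed

lemma centred_polygon_linear_le:
  assumes "u \<in> centred_polygon k r"
    and "\<And>l. l < k \<Longrightarrow> r * cos (\<phi> - 2 * pi * real l / real k) \<le> R"
  shows "cos \<phi> * u 0 + sin \<phi> * u 1 \<le> R"
proof -
  obtain w where w: "\<forall>l<k. 0 \<le> w l" "(\<Sum>l<k. w l) = 1"
    and u: "u 0 = (\<Sum>l<k. w l * (r * cos (2 * pi * real l / real k)))"
      "u 1 = (\<Sum>l<k. w l * (r * sin (2 * pi * real l / real k)))"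
    using assms(1) unfolding mem_centred_polygon by blast
  have "cos \<phi> * u 0 + sin \<phi> * u 1 = (\<Sum>l<k. w l * (r * cos (\<phi> - 2 * pi * real l / real k)))"
    unfolding u by (simp add: sum_distrib_left sum.distrib[symmetric] cos_diff algebra_simps)
  also have "\<dots> \<le> (\<Sum>l<k. w l * R)"
    using w assms(2) by (intro sum_mono mult_left_mono) auto
  also have "\<dots> = R" using w by (simp flip: sum_distrib_right)
  finally show ?thesis .
qed

lemma centred_polygon_linear_le_radius:
  assumes "u \<in> centred_polygon k r" "0 \<le> r"
  shows "cos \<phi> * u 0 + sin \<phi> * u 1 \<le> r"
  using assms by (intro centred_polygon_linear_le) (auto intro: mult_left_le)

lemma centred_polygon_abs_fst_le:
  assumes "u \<in> centred_polygon k r" "0 \<le> r"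
  shows "\<bar>u 0\<bar> \<le> r"
  using centred_polygon_linear_le_radius[OF assms, of 0] centred_polygon_linear_le_radius[OF assms, of pi]
  by simp

lemma centred_polygon_facet_le:
  assumes "u \<in> centred_polygon k r" "0 \<le> r"
  shows "cos (facet_angle k l) * u 0 + sin (facet_angle k l) * u 1 \<le> r * cos (pi / real k)"
proof (rule centred_polygon_linear_le[OF assms(1)])
  fix m
  have "facet_angle k l - 2 * pi * real m / real k = of_int (2 * int l + 1 - 2 * int m) * pi / real k"
    unfolding facet_angle_def by (simp add: diff_divide_distrib[symmetric] algebra_simps)
  then have "cos (facet_angle k l - 2 * pi * real m / real k) \<le> cos (pi / real k)"
    using cos_odd_mult_pi_div_le[of "2 * int l + 1 - 2 * int m" k] by simp
  then show "r * cos (facet_angle k l - 2 * pi * real m / real k) \<le> r * cos (pi / real k)"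
    using assms(2) by (rule mult_left_mono)
qed

lemma polygon_vertex_mem_centred_polygon:
  assumes "m < k"
  shows "polygon_vertex k r m \<in> centred_polygon k r"
  unfolding centred_polygon_def using assms
  by (intro CollectI exI[of _ "\<lambda>l. if l = m then 1 else 0"])
    (auto simp: fun_eq_iff if_distrib[of "\<lambda>x. x * _"] cong: if_cong)

lemma sum_lessThan_point_masses:
  fixes f :: "nat \<Rightarrow> 'a::comm_ring_1"
  assumes "m1 < k" "m2 < k" "m3 < k" "m4 < k"
  shows "(\<Sum>l<k. ((if l = m1 then a1 else 0) + (if l = m2 then a2 else 0) + (if l = m3 then a3 else 0)
            + (if l = m4 then a4 else 0)) * f l) = a1 * f m1 + a2 * f m2 + a3 * f m3 + a4 * f m4"
  using assms by (simp add: distrib_right sum.distrib if_distrib[of "\<lambda>x. x * f _"] cong: if_cong)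

lemma polar_coordinates:
  obtains \<rho> t where "0 \<le> \<rho>" "0 \<le> t" "t < 2 * pi" "x = \<rho> * cos t" "y = \<rho> * sin t"
  using that[of "cmod (Complex x y)" "Arg2pi (Complex x y)"]
    cos_Arg2pi[of "Complex x y"] sin_Arg2pi[of "Complex x y"] Arg2pi_ge_0 Arg2pi_lt_2pi
  by simp

lemma angle_sector_index:
  assumes "0 < k" "0 \<le> t" "t < 2 * pi"
  obtains m where "m < k" "2 * pi * real m / real k \<le> t" "t < 2 * pi * real (Suc m) / real k"
proof -
  define m where "m = nat \<lfloor>t * real k / (2 * pi)\<rfloor>"
  have "0 \<le> t * real k / (2 * pi)" using assms by simp
  then have "real m \<le> t * real k / (2 * pi)" "t * real k / (2 * pi) < real m + 1"
    unfolding m_def by linarith+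
  moreover have "t * real k / (2 * pi) < real k"
    using assms by (simp add: field_simps)
  ultimately have "m < k" by linarith
  with \<open>real m \<le> _\<close> \<open>_ < real m + 1\<close> show ?thesis
    using assms by (intro that[of m]) (simp_all add: field_simps)
qed

lemma cos_sin_two_pi_mod:
  assumes "0 < k"
  shows "cos (2 * pi * real (l mod k) / real k) = cos (2 * pi * real l / real k)"
    and "sin (2 * pi * real (l mod k) / real k) = sin (2 * pi * real l / real k)"
proof -
  have "2 * pi * real l / real k = 2 * pi * real (l mod k) / real k + 2 * real (l div k) * pi"
  proof -
    have "real l = real (l mod k) + real k * real (l div k)"
      by (metis add.commute mod_mult_div_eq of_nat_add of_nat_mult)
    then show ?thesis using assms by (simp add: field_simps)
  qed
  then show "cos (2 * pi * real (l mod k) / real k) = cos (2 * pi * real l / real k)"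
    and "sin (2 * pi * real (l mod k) / real k) = sin (2 * pi * real l / real k)"
    by (simp_all add: cos_add sin_add)
qed

lemma sector_conic_combination:
  fixes A D t \<rho> r :: real
  assumes "0 < D" "D < pi" "A \<le> t" "t \<le> A + D" "0 \<le> \<rho>" "0 < r"
  obtains a b where "0 \<le> a" "0 \<le> b"
    "a * (r * cos A) + b * (r * cos (A + D)) = \<rho> * cos t"
    "a * (r * sin A) + b * (r * sin (A + D)) = \<rho> * sin t"
    "(a + b) * (r * cos (D / 2)) = \<rho> * cos (A + D / 2 - t)"
proof -
  define B where "B = A + D"
  have D: "D = B - A" unfolding B_def by simp
  have sin_D: "0 < sin D" "0 < sin (D / 2)" "0 < cos (D / 2)"
    using assms by (auto intro!: sin_gt_zero cos_gt_zero)
  define a where "a = \<rho> * sin (B - t) / (r * sin D)"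
  define b where "b = \<rho> * sin (t - A) / (r * sin D)"
  have cos_identity: "sin (B - t) * cos A + sin (t - A) * cos B = cos t * sin D"
    and sin_identity: "sin (B - t) * sin A + sin (t - A) * sin B = sin t * sin D"
    unfolding D by (simp_all add: sin_diff algebra_simps)
  have sin_sum: "sin (B - t) + sin (t - A) = 2 * sin (D / 2) * cos (A + D / 2 - t)"
    unfolding sin_plus_sin D by (simp add: field_simps)
  have double: "sin D = 2 * sin (D / 2) * cos (D / 2)"
    using sin_double[of "D / 2"] by simp
  have "(a + b) * (r * cos (D / 2)) = \<rho> * (sin (B - t) + sin (t - A)) * cos (D / 2) / sin D"
    unfolding a_def b_def using sin_D assms by (simp add: field_simps)
  also have "\<dots> = \<rho> * cos (A + D / 2 - t)"
    unfolding sin_sum double using sin_D by (simp add: field_simps)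
  finally have "(a + b) * (r * cos (D / 2)) = \<rho> * cos (A + D / 2 - t)" .
  moreover have "a * (r * cos A) + b * (r * cos B) = \<rho> * cos t"
    "a * (r * sin A) + b * (r * sin B) = \<rho> * sin t"
    unfolding a_def b_def using sin_D assms cos_identity sin_identity
    by (simp_all add: field_simps, simp_all flip: distrib_left)
  moreover have "0 \<le> a" "0 \<le> b"
    unfolding a_def b_def B_def using assms sin_D
    by (auto intro!: divide_nonneg_pos mult_nonneg_nonneg sin_ge_zero)
  ultimately show ?thesis using that unfolding B_def by blast
qed

text \<open>The remaining weight \<open>1 - a - b\<close> is split evenly between the antipodal vertices \<open>0\<close> and \<open>h\<close>,
  whose midpoint is the centre.\<close>
lemma vertex_pair_combination_mem_centred_polygon:
  assumes "k = 2 * h" "0 < h" "m < k" "m' < k" "0 \<le> a" "0 \<le> b" "a + b \<le> 1" "u \<in> vec 2"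
    and "u 0 = a * (r * cos (2 * pi * real m / real k)) + b * (r * cos (2 * pi * real m' / real k))"
    and "u 1 = a * (r * sin (2 * pi * real m / real k)) + b * (r * sin (2 * pi * real m' / real k))"
  shows "u \<in> centred_polygon k r"
proof -
  define e where "e = (1 - a - b) / 2"
  define w where "w l = (if l = m then a else 0) + (if l = m' then b else 0)
    + (if l = 0 then e else 0) + (if l = h then e else 0)" for l
  have sum_w: "(\<Sum>l<k. w l * f l) = a * f m + b * f m' + e * f 0 + e * f h"
    for f :: "nat \<Rightarrow> real"
    unfolding w_def using assms(1-4) by (intro sum_lessThan_point_masses) auto
  have antipode: "2 * pi * real h / real k = pi"
    using assms(1,2) by simp
  show ?thesis
    unfolding mem_centred_polygon
  proof (intro conjI exI[of _ w])
    show "\<forall>l<k. 0 \<le> w l"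
      unfolding w_def e_def using assms(5-7) by auto
    show "(\<Sum>l<k. w l) = 1"
      using sum_w[of "\<lambda>_. 1"] unfolding e_def by simp
    show "u 0 = (\<Sum>l<k. w l * (r * cos (2 * pi * real l / real k)))"
      using sum_w[of "\<lambda>l. r * cos (2 * pi * real l / real k)"] antipode assms(9) by simp
    show "u 1 = (\<Sum>l<k. w l * (r * sin (2 * pi * real l / real k)))"
      using sum_w[of "\<lambda>l. r * sin (2 * pi * real l / real k)"] antipode assms(10) by simp
  qed (rule assms(8))
qed

text \<open>A point satisfying all edge inequalities lies in the angular sector between two consecutive
  vertices, and the edge inequality of that sector bounds the total weight of its conic combination
  of these two vertices by one.\<close>
lemma centred_polygon_if_facets:
  assumes "even k" "4 \<le> k" "0 < r" "u \<in> vec 2"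
    and facets: "\<And>l. l < k \<Longrightarrow>
      cos (facet_angle k l) * u 0 + sin (facet_angle k l) * u 1 \<le> r * cos (pi / real k)"
  shows "u \<in> centred_polygon k r"
proof -
  obtain h where kh: "k = 2 * h" using assms(1) by blast
  define \<alpha> where "\<alpha> l = 2 * pi * real l / real k" for l
  define D where "D = 2 * pi / real k"
  have D: "0 < D" "D < pi" "D / 2 = pi / real k"
    using assms(2) unfolding D_def by (simp_all add: field_simps)
  have cos_edge: "0 < cos (pi / real k)"
    unfolding D(3)[symmetric] using D(1,2) by (intro cos_gt_zero) auto
  obtain \<rho> t where polar: "0 \<le> \<rho>" "0 \<le> t" "t < 2 * pi" "u 0 = \<rho> * cos t" "u 1 = \<rho> * sin t"
    by (rule polar_coordinates)
  obtain m where m: "m < k" "\<alpha> m \<le> t" "t < \<alpha> (Suc m)"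
    using angle_sector_index[of k t] assms(2) polar unfolding \<alpha>_def by auto
  have \<alpha>_Suc: "\<alpha> (Suc m) = \<alpha> m + D"
    unfolding \<alpha>_def D_def by (simp add: add_divide_distrib algebra_simps)
  obtain a b where ab: "0 \<le> a" "0 \<le> b"
    "a * (r * cos (\<alpha> m)) + b * (r * cos (\<alpha> m + D)) = \<rho> * cos t"
    "a * (r * sin (\<alpha> m)) + b * (r * sin (\<alpha> m + D)) = \<rho> * sin t"
    "(a + b) * (r * cos (D / 2)) = \<rho> * cos (\<alpha> m + D / 2 - t)"
    using sector_conic_combination[of D "\<alpha> m" t \<rho> r] D m(2,3) \<alpha>_Suc polar(1) assms(3) by auto
  have "facet_angle k m = \<alpha> m + D / 2"
    unfolding facet_angle_def \<alpha>_def D_def using assms(2) by (simp add: field_simps)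
  then have "(a + b) * (r * cos (pi / real k)) \<le> r * cos (pi / real k)"
    using ab(5) facets[OF m(1)] polar(4,5) D(3) by (simp add: cos_diff algebra_simps)
  then have "a + b \<le> 1"
    using assms(3) cos_edge by simp
  moreover have "cos (\<alpha> (Suc m mod k)) = cos (\<alpha> m + D)" "sin (\<alpha> (Suc m mod k)) = sin (\<alpha> m + D)"
    using cos_sin_two_pi_mod[of k "Suc m"] assms(2) \<alpha>_Suc unfolding \<alpha>_def by auto
  ultimately show ?thesis
    using vertex_pair_combination_mem_centred_polygon[OF kh _ m(1), of "Suc m mod k" a b u r]
      assms(2,4) kh ab(1-4) polar(4,5) unfolding \<alpha>_def by simp
qed

definition layer_sides :: "nat \<Rightarrow> nat" where
  "layer_sides i = 2 ^ (i + 2)"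

definition layer_radius :: "nat \<Rightarrow> real" where
  "layer_radius i = (1 - 1 / 2 ^ i) / 3"

definition layer_slope :: "nat \<Rightarrow> real" where
  "layer_slope i = 1 / (4 * 2 ^ i)"

definition layer :: "nat \<Rightarrow> (nat \<Rightarrow> real) set" where
  "layer i = centred_polygon (layer_sides i) (layer_radius i)"

lemma layer_sides_ge: "4 \<le> layer_sides i"
  using power_increasing[of 2 "i + 2" "2::nat"] unfolding layer_sides_def by simp

lemma even_layer_sides: "even (layer_sides i)"
  unfolding layer_sides_def by simp

lemma strict_mono_layer_sides: "strict_mono layer_sides"
  unfolding strict_mono_def layer_sides_def by (simp add: power_strict_increasing)

lemma layer_radius_bounds:
  assumes "1 \<le> i"
  shows "0 < layer_radius i" "layer_radius i < 1 / 3"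
proof -
  have "2 \<le> (2::real) ^ i" using power_increasing[of 1 i "2::real"] assms by simp
  then show "0 < layer_radius i" "layer_radius i < 1 / 3"
    unfolding layer_radius_def by (simp_all add: field_simps)
qed

lemma two_power_diff_bound:
  fixes i j :: nat
  assumes "i \<noteq> j"
  shows "5 - 3 * (real i - real j) \<le> 4 * 2 ^ j / 2 ^ i"
proof (cases "j < i")
  case True
  then obtain k where k: "i = Suc (j + k)" using less_imp_Suc_add by blast
  then have ratio: "4 * (2::real) ^ j / 2 ^ i = 2 / 2 ^ k" by (simp add: power_add)
  show ?thesis
  proof (cases k)
    case 0
    then show ?thesis unfolding ratio using k by simp
  next
    case (Suc k')
    then have "2 \<le> real i - real j" using k by simp
    moreover have "0 < 2 / (2::real) ^ k" by simp
    ultimately show ?thesis unfolding ratio by (smt (verit))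
  qed
next
  case False
  then obtain k where k: "j = Suc (i + k)" using assms less_imp_Suc_add[of i j] by auto
  then have ratio: "4 * (2::real) ^ j / 2 ^ i = 4 * 2 ^ Suc k" by (simp add: power_add)
  have "Suc (Suc k) \<le> 2 ^ Suc k" using less_exp[of "Suc k"] by linarith
  then have "real (Suc (Suc k)) \<le> real (2 ^ Suc k)" by (simp only: of_nat_le_iff)
  then show ?thesis unfolding ratio using k by simp
qed

text \<open>With \<open>r\<^sub>j (1 - cos (\<pi> / g\<^sub>j)) \<le> 1 / (12 \<cdot> 2\<^sup>j)\<close>, multiplying by \<open>12 \<cdot> 2\<^sup>j\<close> reduces
  this to \<open>two_power_diff_bound\<close>.\<close>
lemma layer_radius_le_tilted_edge:
  assumes "1 \<le> i" "1 \<le> j" "i \<noteq> j"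
  shows "layer_radius i \<le> layer_radius j * cos (pi / real (layer_sides j)) + layer_slope j * (real i - real j)"
proof -
  define X Y where "X = (2::real) ^ j" and "Y = (2::real) ^ i"
  have pos: "0 < X" "0 < Y" unfolding X_def Y_def by simp_all
  have "8 \<le> real (layer_sides j)"
    using power_increasing[of 3 "j + 2" "2::real"] assms(2) unfolding layer_sides_def by simp
  then have "1 - cos (pi / real (layer_sides j)) \<le> 1 / (4 * X)"
    using one_minus_cos_pi_div_le unfolding layer_sides_def X_def by (simp add: power_add)
  then have "layer_radius j - 1 / (12 * X) \<le> layer_radius j * cos (pi / real (layer_sides j))"
    using layer_radius_bounds[OF assms(2)]
      mult_mono[of "layer_radius j" "1 / 3" "1 - cos (pi / real (layer_sides j))" "1 / (4 * X)"]
    by (simp add: algebra_simps)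
  moreover have "(1 / X - 1 / Y) / 3 + 1 / (12 * X) - (real i - real j) / (4 * X)
      = (5 - 3 * (real i - real j) - 4 * X / Y) / (12 * X)"
    using pos by (simp add: field_simps)
  moreover have "(5 - 3 * (real i - real j) - 4 * X / Y) / (12 * X) \<le> 0"
    using two_power_diff_bound[OF assms(3)] pos unfolding X_def Y_def
    by (intro divide_nonpos_pos) auto
  moreover have "layer_radius i = layer_radius j + (1 / X - 1 / Y) / 3"
    "layer_slope j * (real i - real j) = (real i - real j) / (4 * X)"
    unfolding layer_radius_def layer_slope_def X_def Y_def by (simp_all add: field_simps)
  ultimately show ?thesis by linarith
qed

definition tilted_edge_ineq :: "nat \<Rightarrow> nat \<Rightarrow> (nat \<Rightarrow> real) \<Rightarrow> bool" where
  "tilted_edge_ineq j l w \<longleftrightarrow>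
     cos (facet_angle (layer_sides j) l) * (w 0 - w 2) + sin (facet_angle (layer_sides j) l) * w 1
       \<le> layer_radius j * cos (pi / real (layer_sides j)) + layer_slope j * (w 2 - real j)"

definition stacked_body :: "(nat \<Rightarrow> real) set" where
  "stacked_body = {w \<in> vec 3. 1 \<le> w 2 \<and> (\<forall>j\<ge>1. \<forall>l<layer_sides j. tilted_edge_ineq j l w)}"

definition stacked_layers :: "(nat \<Rightarrow> real) set" where
  "stacked_layers = (\<Union>i\<in>{1..}. translate (\<lambda>j. real i * e1 j) (layer i))"

definition at_height :: "real \<Rightarrow> (nat \<Rightarrow> real) \<Rightarrow> nat \<Rightarrow> real" where
  "at_height t x = (\<lambda>n. if n < 2 then x n else if n = 2 then t else 0)"

lemma e1_simps [simp]: "e1 0 = 1" "e1 (Suc 0) = 0" "2 \<le> n \<Longrightarrow> e1 n = 0"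
  unfolding e1_def by auto

lemma mem_translate_iff: "x \<in> translate t P \<longleftrightarrow> (\<lambda>j. x j - t j) \<in> P"
  unfolding translate_def by (auto intro: image_eqI[where x = "\<lambda>j. x j - t j"])

lemma tilted_edge_ineq_at_height:
  "tilted_edge_ineq j l (at_height (real i) (\<lambda>n. u n + real i * e1 n)) \<longleftrightarrow>
     cos (facet_angle (layer_sides j) l) * u 0 + sin (facet_angle (layer_sides j) l) * u 1
       \<le> layer_radius j * cos (pi / real (layer_sides j)) + layer_slope j * (real i - real j)"
  unfolding tilted_edge_ineq_def at_height_def by simp

lemma layer_edge_le_tilted:
  assumes "1 \<le> i" "1 \<le> j" "u \<in> layer i"
  shows "cos (facet_angle (layer_sides j) l) * u 0 + sin (facet_angle (layer_sides j) l) * u 1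
    \<le> layer_radius j * cos (pi / real (layer_sides j)) + layer_slope j * (real i - real j)"
proof -
  have u: "u \<in> centred_polygon (layer_sides i) (layer_radius i)" "0 \<le> layer_radius i"
    using assms(3) layer_radius_bounds[OF assms(1)] unfolding layer_def by simp_all
  show ?thesis
  proof (cases "j = i")
    case True
    then show ?thesis using centred_polygon_facet_le[OF u] by simp
  next
    case False
    then show ?thesis
      using centred_polygon_linear_le_radius[OF u] layer_radius_le_tilted_edge[OF assms(1,2)]
      by (metis order_trans)
  qed
qed

lemma at_height_mem_stacked_body_iff:
  assumes "1 \<le> i" "u \<in> vec 2"
  shows "at_height (real i) (\<lambda>n. u n + real i * e1 n) \<in> stacked_body \<longleftrightarrow> u \<in> layer i"
proof
  assume "at_height (real i) (\<lambda>n. u n + real i * e1 n) \<in> stacked_body"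
  then have "cos (facet_angle (layer_sides i) l) * u 0 + sin (facet_angle (layer_sides i) l) * u 1
      \<le> layer_radius i * cos (pi / real (layer_sides i))" if "l < layer_sides i" for l
    using assms(1) that unfolding stacked_body_def mem_Collect_eq tilted_edge_ineq_at_height by force
  then show "u \<in> layer i"
    unfolding layer_def using assms layer_radius_bounds
    by (intro centred_polygon_if_facets even_layer_sides layer_sides_ge) auto
next
  assume "u \<in> layer i"
  then show "at_height (real i) (\<lambda>n. u n + real i * e1 n) \<in> stacked_body"
    using assms layer_edge_le_tilted
    unfolding stacked_body_def mem_Collect_eq tilted_edge_ineq_at_height
    by (simp add: at_height_def vec_def)
qed

lemma mem_stacked_layers_iff:
  assumes "x \<in> vec 2"
  shows "x \<in> stacked_layers \<longleftrightarrow> (\<exists>i\<ge>1. at_height (real i) x \<in> stacked_body)"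
proof -
  have "at_height (real i) x \<in> stacked_body \<longleftrightarrow> (\<lambda>n. x n - real i * e1 n) \<in> layer i"
    if "1 \<le> i" for i
    using at_height_mem_stacked_body_iff[OF that, of "\<lambda>n. x n - real i * e1 n"] assms
    by (simp add: vec_def)
  then show ?thesis
    unfolding stacked_layers_def by (auto simp: mem_translate_iff)
qed

lemma stacked_body_height_nat:
  assumes "w \<in> stacked_body" "w 2 \<in> \<int>"
  obtains i where "1 \<le> i" "w 2 = real i"
proof -
  obtain k where "w 2 = of_int k" using assms(2) Ints_cases by blast
  moreover have "1 \<le> w 2" using assms(1) unfolding stacked_body_def by simp
  ultimately show ?thesis using that[of "nat k"] by simp
qed

lemma closed_stacked_body: "closed stacked_body"
proof -
  have "stacked_body = (\<Inter>n\<in>{3..}. {w. w n = 0}) \<inter> {w. 1 \<le> w 2} \<inter>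
     (\<Inter>j\<in>{1..}. \<Inter>l\<in>{..<layer_sides j}. {w. tilted_edge_ineq j l w})"
    unfolding stacked_body_def vec_def by auto
  also have "closed \<dots>"
    unfolding tilted_edge_ineq_def
    by (intro closed_Int closed_INT ballI closed_Collect_eq closed_Collect_le continuous_intros
        continuous_on_product_coordinates)
  finally show ?thesis .
qed

lemma convex_set_stacked_body: "convex_set stacked_body"
  unfolding convex_set_def
proof (intro ballI allI impI)
  fix x y :: "nat \<Rightarrow> real" and u :: real
  assume x: "x \<in> stacked_body" and y: "y \<in> stacked_body" and u: "0 \<le> u \<and> u \<le> 1"
  define z where "z = (\<lambda>i. u * x i + (1 - u) * y i)"
  have combine: "u * f x + (1 - u) * f y \<le> u * g x + (1 - u) * g y"
    if "f x \<le> g x" "f y \<le> g y" for f g :: "(nat \<Rightarrow> real) \<Rightarrow> real"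
    using that u by (intro add_mono mult_left_mono) auto
  have "1 \<le> z 2"
    using combine[of "\<lambda>_. 1" "\<lambda>w. w 2"] x y unfolding stacked_body_def z_def by simp
  moreover have "tilted_edge_ineq j l z" if "1 \<le> j" "l < layer_sides j" for j l
    using combine[of "\<lambda>w. cos (facet_angle (layer_sides j) l) * (w 0 - w 2) + sin (facet_angle (layer_sides j) l) * w 1"
        "\<lambda>w. layer_radius j * cos (pi / real (layer_sides j)) + layer_slope j * (w 2 - real j)"]
      x y that unfolding stacked_body_def tilted_edge_ineq_def z_def by (simp add: algebra_simps)
  moreover have "z \<in> vec 3"
    using x y unfolding stacked_body_def vec_def z_def by simp
  ultimately show "(\<lambda>i. u * x i + (1 - u) * y i) \<in> stacked_body"
    unfolding stacked_body_def z_def[symmetric] by simp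
qed

lemma convex_set_coordinate_between:
  assumes "convex_set M" "x \<in> M" "y \<in> M" "x n \<le> t" "t \<le> y n"
  obtains w where "w \<in> M" "w n = t"
proof (cases "x n = y n")
  case True
  then show ?thesis using that assms by force
next
  case False
  define c where "c = (y n - t) / (y n - x n)"
  have "0 \<le> c" "c \<le> 1"
    unfolding c_def using assms(4,5) False by (auto simp: field_simps)
  then have "(\<lambda>i. c * x i + (1 - c) * y i) \<in> M"
    using assms(1-3) unfolding convex_set_def by blast
  moreover have "c * x n + (1 - c) * y n = y n - c * (y n - x n)"
    by (simp add: algebra_simps)
  moreover have "c * (y n - x n) = y n - t"
    unfolding c_def using False by simp
  ultimately show ?thesis using that by auto
qed

lemma at_height_vertex_mem_stacked_body:
  assumes "1 \<le> i"
  shows "at_height (real i) (\<lambda>n. polygon_vertex (layer_sides i) (layer_radius i) 0 n + real i * e1 n)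
    \<in> stacked_body"
proof -
  have "polygon_vertex (layer_sides i) (layer_radius i) 0 \<in> layer i"
    unfolding layer_def using layer_sides_ge[of i] by (intro polygon_vertex_mem_centred_polygon) simp
  then show ?thesis
    using at_height_mem_stacked_body_iff[OF assms] unfolding layer_def mem_centred_polygon by blast
qed

lemma proj_z_stacked_body: "proj_z 2 0 1 stacked_body = {z \<in> vec 1. 1 \<le> z 0}"
proof
  show "proj_z 2 0 1 stacked_body \<subseteq> {z \<in> vec 1. 1 \<le> z 0}"
    unfolding proj_z_def stacked_body_def vec_def by auto
next
  show "{z \<in> vec 1. 1 \<le> z 0} \<subseteq> proj_z 2 0 1 stacked_body"
  proof
    fix z assume z: "z \<in> {z \<in> vec 1. 1 \<le> z 0}"
    define N where "N = nat \<lceil>z 0\<rceil>"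
    have "1 \<le> z 0" using z by simp
    then have N: "1 \<le> N" "z 0 \<le> real N"
      unfolding N_def by linarith+
    obtain w where w: "w \<in> stacked_body" "w 2 = z 0"
      using convex_set_coordinate_between[OF convex_set_stacked_body
          at_height_vertex_mem_stacked_body[of 1] at_height_vertex_mem_stacked_body[OF N(1)], of 2 "z 0"]
        z N
      unfolding at_height_def by auto
    have "z = (\<lambda>i. if i < 1 then w (2 + 0 + i) else 0)"
      using z w(2) unfolding vec_def by (auto simp: fun_eq_iff)
    then show "z \<in> proj_z 2 0 1 stacked_body"
      unfolding proj_z_def using w(1) by blast
  qed
qed

lemma Rats_common_denominator:
  fixes a :: "nat \<Rightarrow> real" and n :: nat
  assumes "\<And>i. a i \<in> \<rat>"
  shows "\<exists>q::nat. 0 < q \<and> (\<forall>i<n. real q * a i \<in> \<int>)"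
proof (induction n)
  case 0
  show ?case by (intro exI[of _ 1]) simp
next
  case (Suc n)
  then obtain q :: nat where q: "0 < q" "\<forall>i<n. real q * a i \<in> \<int>" by blast
  obtain p b where pb: "0 < b" "a n = of_int p / of_int b"
    using assms[of n] Rats_cases' by blast
  have "real (q * nat b) * a i \<in> \<int>" if "i < Suc n" for i
  proof (cases "i = n")
    case True
    then show ?thesis using pb by simp
  next
    case False
    then have "real (q * nat b) * a i = of_int b * (real q * a i)" using pb(1) by simp
    then show ?thesis using q(2) False that by (metis Ints_mult Ints_of_int less_SucE)
  qed
  then show ?case using q(1) pb(1) by (intro exI[of _ "q * nat b"]) simp
qed

text \<open>Every rational affine image of a half-line is a point or a half-line with rational direction,
  and scaling the direction by a common denominator makes it integral.\<close>
lemma rationally_unbounded_half_line: "rationally_unbounded 1 {z \<in> vec 1. a \<le> z 0}"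
  unfolding rationally_unbounded_def Let_def
proof (intro allI impI)
  fix d' :: nat and A :: "nat \<Rightarrow> nat \<Rightarrow> real" and b :: "nat \<Rightarrow> real"
  assume rat: "(\<forall>i j. A i j \<in> \<rat>) \<and> (\<forall>i. b i \<in> \<rat>)"
  define f where "f t = (\<lambda>i. if i < d' then A i 0 * t + b i else 0)" for t
  have image: "aff_map 1 d' A b ` {z \<in> vec 1. a \<le> z 0} = f ` {a..}"
  proof -
    have "aff_map 1 d' A b z = f (z 0)" for z
      unfolding aff_map_def f_def by (auto simp: fun_eq_iff)
    moreover have "{a..} = (\<lambda>z. z 0) ` {z \<in> vec 1. a \<le> z 0}"
      by (auto simp: vec_def image_iff intro!: exI[of _ "\<lambda>i. if i = 0 then _ else 0"])
    ultimately show ?thesis by (simp add: image_image)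
  qed
  have "bounded_set (f ` {a..}) \<or> (\<exists>r\<in>rec_cone d' (f ` {a..}). (\<exists>i. r i \<noteq> 0) \<and> (\<forall>i. r i \<in> \<int>))"
  proof (cases "\<forall>i<d'. A i 0 = 0")
    case True
    have "\<bar>f t i\<bar> \<le> (\<Sum>i<d'. \<bar>b i\<bar>)" for t i
      using True member_le_sum[of i "{..<d'}" "\<lambda>i. \<bar>b i\<bar>"] unfolding f_def
      by (auto simp: sum_nonneg)
    then show ?thesis unfolding bounded_set_def by blast
  next
    case False
    then obtain i0 where i0: "i0 < d'" "A i0 0 \<noteq> 0" by blast
    obtain q :: nat where q: "0 < q" "\<forall>i<d'. real q * A i 0 \<in> \<int>"
      using Rats_common_denominator[of "\<lambda>i. A i 0" d'] rat by blast
    define r where "r i = (if i < d' then real q * A i 0 else 0)" for i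
    have "r \<in> rec_cone d' (f ` {a..})"
      unfolding rec_cone_def
    proof (intro CollectI conjI ballI allI impI)
      show "r \<in> vec d'" unfolding r_def vec_def by simp
      fix x s assume "x \<in> f ` {a..}" "0 \<le> (s::real)"
      then obtain t where "a \<le> t" "x = f t" by auto
      then have "(\<lambda>i. x i + s * r i) = f (t + s * real q)"
        unfolding f_def r_def by (auto simp: fun_eq_iff algebra_simps)
      moreover have "a \<le> t + s * real q"
        using \<open>a \<le> t\<close> \<open>0 \<le> s\<close> by (simp add: add_increasing2)
      ultimately show "(\<lambda>i. x i + s * r i) \<in> f ` {a..}" by simp
    qed
    moreover have "r i0 \<noteq> 0" "\<forall>i. r i \<in> \<int>"
      unfolding r_def using i0 q by auto
    ultimately show ?thesis by blast
  qed
  then show "bounded_set (aff_map 1 d' A b ` {z \<in> vec 1. a \<le> z 0}) \<or>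
    (\<exists>r\<in>rec_cone d' (aff_map 1 d' A b ` {z \<in> vec 1. a \<le> z 0}). (\<exists>i. r i \<noteq> 0) \<and> (\<forall>i. r i \<in> \<int>))"
    unfolding image .
qed

lemma join_eq_at_height: "z \<in> vec 1 \<Longrightarrow> join 2 0 x y z = at_height (z 0) x"
  unfolding join_def at_height_def vec_def by (auto simp: fun_eq_iff)

lemma stacked_body_represents: "MICP_repr_by 2 0 1 stacked_body stacked_layers"
  unfolding MICP_repr_by_def
proof (intro conjI ballI closed_stacked_body convex_set_stacked_body)
  show "stacked_body \<subseteq> vec (2 + 0 + 1)"
    unfolding stacked_body_def by auto
  fix x :: "nat \<Rightarrow> real" assume x: "x \<in> vec 2"
  have "(\<exists>y\<in>vec 0. \<exists>z\<in>vec 1. (\<forall>i<1. z i \<in> \<int>) \<and> join 2 0 x y z \<in> stacked_body) \<longleftrightarrow>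
      (\<exists>t\<in>\<int>. at_height t x \<in> stacked_body)"
  proof
    assume "\<exists>t\<in>\<int>. at_height t x \<in> stacked_body"
    then obtain t where "t \<in> \<int>" "at_height t x \<in> stacked_body" by blast
    then show "\<exists>y\<in>vec 0. \<exists>z\<in>vec 1. (\<forall>i<1. z i \<in> \<int>) \<and> join 2 0 x y z \<in> stacked_body"
      using join_eq_at_height[of "\<lambda>n. if n = 0 then t else 0"]
      by (intro bexI[of _ "\<lambda>_. 0"] bexI[of _ "\<lambda>n. if n = 0 then t else 0"]) (auto simp: vec_def)
  qed (auto simp: join_eq_at_height)
  also have "\<dots> \<longleftrightarrow> (\<exists>i\<ge>1. at_height (real i) x \<in> stacked_body)"
  proof
    assume "\<exists>t\<in>\<int>. at_height t x \<in> stacked_body"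
    then obtain t where t: "t \<in> \<int>" "at_height t x \<in> stacked_body" by blast
    then obtain i where "1 \<le> i" "t = real i"
      using stacked_body_height_nat[of "at_height t x"] by (auto simp: at_height_def)
    then show "\<exists>i\<ge>1. at_height (real i) x \<in> stacked_body" using t(2) by blast
  qed (use Ints_of_nat in blast)
  also have "\<dots> \<longleftrightarrow> x \<in> stacked_layers"
    using mem_stacked_layers_iff[OF x] by simp
  finally show "x \<in> stacked_layers \<longleftrightarrow>
      (\<exists>y\<in>vec 0. \<exists>z\<in>vec 1. (\<forall>i<1. z i \<in> \<int>) \<and> join 2 0 x y z \<in> stacked_body)"
    by simp
qed

lemma stacked_layers_subset_vec: "stacked_layers \<subseteq> vec 2"
  unfolding stacked_layers_def translate_def layer_def by (auto simp: mem_centred_polygon vec_def)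

lemma translate_layer_fst:
  assumes "1 \<le> i" "x \<in> translate (\<lambda>k. real i * e1 k) (layer i)"
  shows "\<bar>x 0 - real i\<bar> < 1 / 3"
proof -
  have "\<bar>x 0 - real i\<bar> \<le> layer_radius i"
    using centred_polygon_abs_fst_le[of "\<lambda>n. x n - real i * e1 n"] layer_radius_bounds[OF assms(1)]
      assms(2) unfolding mem_translate_iff layer_def by simp
  then show ?thesis using layer_radius_bounds[OF assms(1)] by simp
qed

lemma translate_layers_disjoint:
  assumes "1 \<le> i" "1 \<le> j" "i \<noteq> j"
  shows "translate (\<lambda>k. real i * e1 k) (layer i) \<inter> translate (\<lambda>k. real j * e1 k) (layer j) = {}"
proof (rule equals0I)
  fix x assume "x \<in> translate (\<lambda>k. real i * e1 k) (layer i) \<inter> translate (\<lambda>k. real j * e1 k) (layer j)"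
  then have "\<bar>x 0 - real i\<bar> < 1 / 3" "\<bar>x 0 - real j\<bar> < 1 / 3"
    using translate_layer_fst assms(1,2) by blast+
  then have "\<bar>real i - real j\<bar> < 1" by linarith
  then show False using assms(3) by linarith
qed

theorem corollary1:
  shows "\<exists>(g :: nat \<Rightarrow> nat) (P :: nat \<Rightarrow> (nat \<Rightarrow> real) set).
     strict_mono_on {1..} g \<and> (\<forall>i\<ge>1. g i \<ge> 1) \<and>
     (\<forall>i\<ge>1. regular_polygon (g i) (P i)) \<and>
     rational_MICP_representable 2
        (\<Union>i\<in>{1..}. translate (\<lambda>j. real i * e1 j) (P i)) \<and>
     (\<forall>i\<ge>1. \<forall>j\<ge>1. i \<noteq> j \<longrightarrow>
        translate (\<lambda>k. real i * e1 k) (P i) \<inter> translate (\<lambda>k. real j * e1 k) (P j) = {})"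
proof (intro exI[of _ layer_sides] exI[of _ layer] conjI allI impI)
  show "strict_mono_on {1..} layer_sides"
    using strict_mono_layer_sides by (simp add: strict_mono_on_def strict_mono_def)
  show "1 \<le> layer_sides i" for i
    using layer_sides_ge[of i] by simp
  show "regular_polygon (layer_sides i) (layer i)" if "1 \<le> i" for i
    unfolding layer_def using layer_sides_ge[of i] layer_radius_bounds[OF that]
    by (intro regular_polygon_centred_polygon) auto
  show "rational_MICP_representable 2 (\<Union>i\<in>{1..}. translate (\<lambda>j. real i * e1 j) (layer i))"
    unfolding rational_MICP_representable_def stacked_layers_def[symmetric]
    using stacked_layers_subset_vec stacked_body_represents rationally_unbounded_half_line[of 1]
    unfolding proj_z_stacked_body[symmetric] by blast
  show "translate (\<lambda>k. real i * e1 k) (layer i) \<inter> translate (\<lambda>k. real j * e1 k) (layer j) = {}"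
    if "1 \<le> i" "1 \<le> j" "i \<noteq> j" for i j
    using translate_layers_disjoint that .
qed

end
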